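(* Consider an operational theory (describing an experiment) containing a which-way measurement $Z$ and a which-phase measurement $X$, each with outcomes in $\{+1,-1\}$, and suppose some realizable operational state $\vec{s}_1$ satisfies the $A_1^2$-orbit-realizability condition relative to $Z$ and $X$. If the path distinguishability $\mathcal{P}=|\langle Z\rangle_{\vec{s}_1}|$ and fringe visibility $\mathcal{V}=|\langle X\rangle_{\vec{s}_1}|$ of this state satisfy $\mathcal{V}+\mathcal{P}>1$, then the operational theory (experiment) admits no (generalized-)noncontextual ontological model.
   Context: An operational theory (for a single system, prepare-measure scenario) specifies a set of preparations $P$, measurements $M$, and probabilities $\mathbb{P}(y|M,P)$. Each preparation is represented by a real vector $\vec{s}_P$ (its operational state) and each effect $[y|M]$ by a real vector $\vec{e}_{y|M}$ with $\mathbb{P}(y|M,P)=\vec{s}_P\cdot\vec{e}_{y|M}$; two preparations are operationally equivalent iff they have the same vector. The set of realizable operational states is closed under convex mixtures. For a measurement $M$ with outcomes $\pm1$, $\langle M\rangle_{\vec{s}}=\mathbb{P}(+1|M,\vec{s})-\mathbb{P}(-1|M,\vec{s})$. An ontological model assigns a (finite) set $\Lambda$, to each preparation $P$ a distribution $\mu(\lambda|P)$, and to each measurement $M$ a conditional distribution $\xi(y|M,\lambda)$, with $\mathbb{P}(y|M,P)=\sum_\lambda\xi(y|M,\lambda)\mu(\lambda|P)$. It is (generalized, preparation-)noncontextual if operationally equivalent preparations receive the same distribution; in particular $\sum_i w_i\vec{s}_i=\sum_j w'_j\vec{s}'_j$ (probability weights) implies $\sum_i w_i\mu(\cdot|P_i)=\sum_j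 w'_j\mu(\cdot|P'_j)$. A state $\vec{s}_1$ satisfies the $A_1^2$-orbit-realizability condition relative to $M,M'$ if there exist realizable operational states $\vec{s}_2,\vec{s}_3,\vec{s}_4$ with $\langle M\rangle_{\vec{s}_1}=\langle M\rangle_{\vec{s}_2}=-\langle M\rangle_{\vec{s}_3}=-\langle M\rangle_{\vec{s}_4}$, $\langle M'\rangle_{\vec{s}_1}=-\langle M'\rangle_{\vec{s}_2}=-\langle M'\rangle_{\vec{s}_3}=\langle M'\rangle_{\vec{s}_4}$, and $\tfrac12\vec{s}_1+\tfrac12\vec{s}_3=\tfrac12\vec{s}_2+\tfrac12\vec{s}_4$. *)

theory Defs
  imports "HOL-Analysis.Analysis"
begin

text \<open>
Operational theory: preparations are labels of type 'p, with operational state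
st P :: 'v (a real vector); measurements are labels of type 'm, with outcome set
Out M :: int set and effect vectors E M y :: 'v, so that
P(y|M,P) = st P \<bullet> E M y.  The realizable operational states are range st.
\<close>

definition op_prob :: "'v::euclidean_space \<Rightarrow> ('m \<Rightarrow> int \<Rightarrow> 'v) \<Rightarrow> 'm \<Rightarrow> int \<Rightarrow> real" where
  "op_prob s E M y = s \<bullet> E M y"

definition expect :: "('m \<Rightarrow> int \<Rightarrow> 'v::euclidean_space) \<Rightarrow> 'm \<Rightarrow> 'v \<Rightarrow> real" where
  "expect E M s = op_prob s E M 1 - op_prob s E M (-1)"

definition A12_orbit_realizable ::
  "('p \<Rightarrow> 'v::euclidean_space) \<Rightarrow> ('m \<Rightarrow> int \<Rightarrow> 'v) \<Rightarrow> 'm \<Rightarrow> 'm \<Rightarrow> 'v \<Rightarrow> bool" where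
  "A12_orbit_realizable st E M M' s1 \<longleftrightarrow>
     (\<exists>s2 \<in> range st. \<exists>s3 \<in> range st. \<exists>s4 \<in> range st.
        expect E M s1 = expect E M s2 \<and> expect E M s2 = - expect E M s3 \<and>
        - expect E M s3 = - expect E M s4 \<and>
        expect E M' s1 = - expect E M' s2 \<and> - expect E M' s2 = - expect E M' s3 \<and>
        - expect E M' s3 = expect E M' s4 \<and>
        (1/2) *\<^sub>R s1 + (1/2) *\<^sub>R s3 = (1/2) *\<^sub>R s2 + (1/2) *\<^sub>R s4)"

definition ontological_model ::
  "('p \<Rightarrow> 'v::euclidean_space) \<Rightarrow> ('m \<Rightarrow> int \<Rightarrow> 'v) \<Rightarrow> ('m \<Rightarrow> int set)
   \<Rightarrow> 'l set \<Rightarrow> ('p \<Rightarrow> 'l \<Rightarrow> real) \<Rightarrow> ('m \<Rightarrow> int \<Rightarrow> 'l \<Rightarrow> real) \<Rightarrow> bool" where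
  "ontological_model st E Out \<Lambda> \<mu> \<xi> \<longleftrightarrow>
     finite \<Lambda> \<and>
     (\<forall>P. (\<forall>l\<in>\<Lambda>. 0 \<le> \<mu> P l) \<and> (\<Sum>l\<in>\<Lambda>. \<mu> P l) = 1) \<and>
     (\<forall>M. \<forall>l\<in>\<Lambda>. (\<forall>y\<in>Out M. 0 \<le> \<xi> M y l) \<and> (\<Sum>y\<in>Out M. \<xi> M y l) = 1) \<and>
     (\<forall>M P. \<forall>y\<in>Out M. op_prob (st P) E M y = (\<Sum>l\<in>\<Lambda>. \<xi> M y l * \<mu> P l))"

definition noncontextual ::
  "('p \<Rightarrow> 'v::euclidean_space) \<Rightarrow> 'l set \<Rightarrow> ('p \<Rightarrow> 'l \<Rightarrow> real) \<Rightarrow> bool" where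
  "noncontextual st \<Lambda> \<mu> \<longleftrightarrow>
     (\<forall>(n::nat) (m::nat) (w::nat \<Rightarrow> real) (Ps::nat \<Rightarrow> 'p) (w'::nat \<Rightarrow> real) (Ps'::nat \<Rightarrow> 'p).
        (\<forall>i<n. 0 \<le> w i) \<and> (\<Sum>i<n. w i) = 1 \<and>
        (\<forall>j<m. 0 \<le> w' j) \<and> (\<Sum>j<m. w' j) = 1 \<and>
        (\<Sum>i<n. w i *\<^sub>R st (Ps i)) = (\<Sum>j<m. w' j *\<^sub>R st (Ps' j))
        \<longrightarrow> (\<forall>l\<in>\<Lambda>. (\<Sum>i<n. w i * \<mu> (Ps i) l) = (\<Sum>j<m. w' j * \<mu> (Ps' j) l)))"

end

theory Submission
  imports Defs
begin

text \<open>
In a noncontextual model the mixture relation of the orbit lifts to the ontic distributions: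
\<open>\<mu>\<^sub>1 + \<mu>\<^sub>3 = \<mu>\<^sub>2 + \<mu>\<^sub>4\<close> pointwise. Writing \<open>r\<^sub>M(\<lambda>) \<in> [-1,1]\<close> for the response bias of a
\<open>\<plusminus>1\<close>-measurement, the orbit combinations of expectations are
\<open>\<Sum>\<^sub>\<lambda> r\<^sub>Z (\<mu>\<^sub>1+\<mu>\<^sub>2-\<mu>\<^sub>3-\<mu>\<^sub>4)\<close> and \<open>\<Sum>\<^sub>\<lambda> r\<^sub>X (\<mu>\<^sub>1-\<mu>\<^sub>2-\<mu>\<^sub>3+\<mu>\<^sub>4)\<close>, whose absolute values add up
to at most \<open>\<Sum>\<^sub>\<lambda> 2(\<mu>\<^sub>1+\<mu>\<^sub>3) = 4\<close>. On the \<open>A\<^sub>1\<^sup>2\<close>-orbit of \<open>s\<^sub>1\<close> they equal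
\<open>4\<langle>Z\<rangle>\<close> and \<open>4\<langle>X\<rangle>\<close>, so \<open>V + P \<le> 1\<close>.
\<close>

lemma noncontextual_half_mixture:
  assumes "noncontextual st \<Lambda> \<mu>"
    and "(1/2) *\<^sub>R st P1 + (1/2) *\<^sub>R st P3 = (1/2) *\<^sub>R st P2 + (1/2) *\<^sub>R st P4"
    and "l \<in> \<Lambda>"
  shows "\<mu> P1 l + \<mu> P3 l = \<mu> P2 l + \<mu> P4 l"
proof -
  define w :: "nat \<Rightarrow> real" where "w = (\<lambda>_. 1/2)"
  define Ps where "Ps = (\<lambda>i::nat. if i = 0 then P1 else P3)"
  define Ps' where "Ps' = (\<lambda>i::nat. if i = 0 then P2 else P4)"
  note sum2 = lessThan_Suc numeral_2_eq_2
  have "(\<Sum>i<2. w i *\<^sub>R st (Ps i)) = (\<Sum>j<2. w j *\<^sub>R st (Ps' j))"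
    using assms(2) by (simp add: sum2 w_def Ps_def Ps'_def add.commute)
  moreover have "(\<Sum>i<2. w i) = 1" "\<forall>i<2. 0 \<le> w i"
    by (simp_all add: sum2 w_def)
  ultimately have "(\<Sum>i<2. w i * \<mu> (Ps i) l) = (\<Sum>j<2. w j * \<mu> (Ps' j) l)"
    using assms(1,3) unfolding noncontextual_def by blast
  then show ?thesis by (simp add: sum2 w_def Ps_def Ps'_def)
qed

definition response_bias :: "('m \<Rightarrow> int \<Rightarrow> 'l \<Rightarrow> real) \<Rightarrow> 'm \<Rightarrow> 'l \<Rightarrow> real" where
  "response_bias \<xi> M l = \<xi> M 1 l - \<xi> M (-1) l"

lemma abs_response_bias_le_1:
  assumes "ontological_model st E Out \<Lambda> \<mu> \<xi>" and "Out M = {1, -1}" and "l \<in> \<Lambda>"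
  shows "\<bar>response_bias \<xi> M l\<bar> \<le> 1"
proof -
  have "\<forall>y\<in>Out M. 0 \<le> \<xi> M y l" and "(\<Sum>y\<in>Out M. \<xi> M y l) = 1"
    using assms(1,3) unfolding ontological_model_def by blast+
  then show ?thesis unfolding response_bias_def assms(2) by (simp add: abs_le_iff)
qed

lemma expect_eq_sum_response_bias:
  assumes "ontological_model st E Out \<Lambda> \<mu> \<xi>" and "Out M = {1, -1}"
  shows "expect E M (st P) = (\<Sum>l\<in>\<Lambda>. response_bias \<xi> M l * \<mu> P l)"
proof -
  have "op_prob (st P) E M y = (\<Sum>l\<in>\<Lambda>. \<xi> M y l * \<mu> P l)" if "y \<in> Out M" for y
    using assms(1) that unfolding ontological_model_def by blast
  then show ?thesis
    unfolding expect_def response_bias_def assms(2) by (simp add: sum_subtractf left_diff_distrib)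
qed

lemma abs_sum_bounded_weights_le:
  assumes "\<And>l. l \<in> A \<Longrightarrow> \<bar>r l\<bar> \<le> (1::real)"
  shows "\<bar>\<Sum>l\<in>A. r l * f l\<bar> \<le> (\<Sum>l\<in>A. \<bar>f l\<bar>)"
proof -
  have "\<bar>\<Sum>l\<in>A. r l * f l\<bar> \<le> (\<Sum>l\<in>A. \<bar>r l\<bar> * \<bar>f l\<bar>)"
    using sum_abs[of "\<lambda>l. r l * f l" A] by (simp add: abs_mult)
  also have "\<dots> \<le> (\<Sum>l\<in>A. \<bar>f l\<bar>)"
    using assms by (intro sum_mono) (simp add: mult_left_le_one_le)
  finally show ?thesis .
qed

lemma abs_orbit_combinations_le:
  fixes m1 m2 m3 m4 :: real
  assumes "0 \<le> m1" "0 \<le> m2" "0 \<le> m3" "0 \<le> m4" and "m1 + m3 = m2 + m4"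
  shows "\<bar>m1 + m2 - m3 - m4\<bar> + \<bar>m1 - m2 - m3 + m4\<bar> \<le> 2 * (m1 + m3)"
  \<comment> \<open>The left side is \<open>2 max \<bar>m1 - m3\<bar> \<bar>m2 - m4\<bar>\<close>, and \<open>m2 + m4 = m1 + m3\<close>.\<close>
  using assms by (smt (verit))

lemma noncontextual_orbit_bound:
  assumes model: "ontological_model st E Out \<Lambda> \<mu> \<xi>" and nc: "noncontextual st \<Lambda> \<mu>"
    and Z: "Out Z = {1, -1}" and X: "Out X = {1, -1}"
    and mix: "(1/2) *\<^sub>R st P1 + (1/2) *\<^sub>R st P3 = (1/2) *\<^sub>R st P2 + (1/2) *\<^sub>R st P4"
  shows "\<bar>expect E Z (st P1) + expect E Z (st P2) - expect E Z (st P3) - expect E Z (st P4)\<bar>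
       + \<bar>expect E X (st P1) - expect E X (st P2) - expect E X (st P3) + expect E X (st P4)\<bar> \<le> 4"
proof -
  define p where "p l = \<mu> P1 l + \<mu> P2 l - \<mu> P3 l - \<mu> P4 l" for l
  define q where "q l = \<mu> P1 l - \<mu> P2 l - \<mu> P3 l + \<mu> P4 l" for l
  have \<mu>_nonneg: "\<And>P l. l \<in> \<Lambda> \<Longrightarrow> 0 \<le> \<mu> P l" and \<mu>_sum: "\<And>P. (\<Sum>l\<in>\<Lambda>. \<mu> P l) = 1"
    using model unfolding ontological_model_def by blast+
  have combination: "a * expect E M (st P1) + b * expect E M (st P2)
        + c * expect E M (st P3) + d * expect E M (st P4)
      = (\<Sum>l\<in>\<Lambda>. response_bias \<xi> M l * (a * \<mu> P1 l + b * \<mu> P2 l + c * \<mu> P3 l + d * \<mu> P4 l))"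
    if "Out M = {1, -1}" for M and a b c d :: real
    unfolding expect_eq_sum_response_bias[OF model that]
    by (simp add: algebra_simps sum.distrib sum_distrib_left)
  have "\<bar>expect E Z (st P1) + expect E Z (st P2) - expect E Z (st P3) - expect E Z (st P4)\<bar>
      \<le> (\<Sum>l\<in>\<Lambda>. \<bar>p l\<bar>)"
    using combination[OF Z, of 1 1 "-1" "-1"]
      abs_sum_bounded_weights_le[of \<Lambda> "response_bias \<xi> Z" p, OF abs_response_bias_le_1[OF model Z]]
    by (simp add: p_def)
  moreover have "\<bar>expect E X (st P1) - expect E X (st P2) - expect E X (st P3) + expect E X (st P4)\<bar>
      \<le> (\<Sum>l\<in>\<Lambda>. \<bar>q l\<bar>)"
    using combination[OF X, of 1 "-1" "-1" 1]
      abs_sum_bounded_weights_le[of \<Lambda> "response_bias \<xi> X" q, OF abs_response_bias_le_1[OF model X]]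
    by (simp add: q_def)
  moreover have "(\<Sum>l\<in>\<Lambda>. \<bar>p l\<bar>) + (\<Sum>l\<in>\<Lambda>. \<bar>q l\<bar>) \<le> (\<Sum>l\<in>\<Lambda>. 2 * (\<mu> P1 l + \<mu> P3 l))"
    unfolding sum.distrib[symmetric] p_def q_def
    by (intro sum_mono abs_orbit_combinations_le \<mu>_nonneg noncontextual_half_mixture[OF nc mix])
  moreover have "(\<Sum>l\<in>\<Lambda>. 2 * (\<mu> P1 l + \<mu> P3 l)) = 4"
    by (simp add: sum_distrib_left[symmetric] sum.distrib \<mu>_sum)
  ultimately show ?thesis by linarith
qed

theorem corollary2:
  fixes st :: "'p \<Rightarrow> 'v::euclidean_space"
    and E :: "'m \<Rightarrow> int \<Rightarrow> 'v"
    and Out :: "'m \<Rightarrow> int set"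
    and Z X :: 'm
    and s1 :: 'v
  assumes "convex (range st)"
    and "Out Z = {1, -1}" and "Out X = {1, -1}"
    and "s1 \<in> range st"
    and "A12_orbit_realizable st E Z X s1"
    and "\<bar>expect E X s1\<bar> + \<bar>expect E Z s1\<bar> > 1"
  shows "\<not> (\<exists>(\<Lambda>::'l set) \<mu> \<xi>. ontological_model st E Out \<Lambda> \<mu> \<xi> \<and> noncontextual st \<Lambda> \<mu>)"
proof
  assume "\<exists>(\<Lambda>::'l set) \<mu> \<xi>. ontological_model st E Out \<Lambda> \<mu> \<xi> \<and> noncontextual st \<Lambda> \<mu>"
  then obtain \<Lambda> :: "'l set" and \<mu> \<xi>
    where model: "ontological_model st E Out \<Lambda> \<mu> \<xi>" and nc: "noncontextual st \<Lambda> \<mu>"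
    by blast
  obtain P1 where P1: "s1 = st P1" using assms(4) by auto
  obtain P2 P3 P4 where
    "expect E Z s1 = expect E Z (st P2)" "expect E Z (st P2) = - expect E Z (st P3)"
    "expect E Z (st P3) = expect E Z (st P4)"
    "expect E X s1 = - expect E X (st P2)" "expect E X (st P2) = expect E X (st P3)"
    "- expect E X (st P3) = expect E X (st P4)"
    and mix: "(1/2) *\<^sub>R st P1 + (1/2) *\<^sub>R st P3 = (1/2) *\<^sub>R st P2 + (1/2) *\<^sub>R st P4"
    using assms(5) unfolding A12_orbit_realizable_def P1 by auto
  then have "4 * \<bar>expect E Z s1\<bar> + 4 * \<bar>expect E X s1\<bar> \<le> 4"
    using noncontextual_orbit_bound[OF model nc assms(2,3) mix] unfolding P1 by simp
  with assms(6) show False by linarith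
qed

end
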